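(* Let $M\ge 3$ be an integer, let $\boldsymbol{\zeta}_1,\boldsymbol{\zeta}_2$ be unit vectors in $\mathbb{R}^M$, let $l\ge 0$ be an integer, $\sigma\in\{0,1\}$, and let $\rho$ be a real number for which all Gamma functions below are finite and $\Gamma(\rho)\neq\infty$. Then $$C^{\rho}_{2l+\sigma}\big((\boldsymbol{\zeta}_1\cdot\boldsymbol{\zeta}_2)\big)=\sum_{m=0}^{l}\frac{(-1)^{m+l}\,\Gamma(\rho+2l+\sigma+1)\,\Gamma(\rho+l+m+\sigma)\,\Gamma\!\left(\frac M2+l+m+\sigma\right)}{(l-m)!\,\Gamma(\rho)\,\Gamma(\rho+l+m+\sigma+1)\,\Gamma\!\left(\frac M2\right)}\int\frac{d\Omega_{\boldsymbol{\zeta}}}{S_M}\frac{\big(2(\boldsymbol{\zeta}_1\cdot\boldsymbol{\zeta})\big)^{2l+\sigma}}{(2l+\sigma)!}\,\frac{\big(2(\boldsymbol{\zeta}_2\cdot\boldsymbol{\zeta})\big)^{2m+\sigma}}{(2m+\sigma)!}.$$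
   Context: $C^{\rho}_n$ denotes the Gegenbauer polynomial of degree $n$ and parameter $\rho$. $d\Omega_{\boldsymbol\zeta}$ is the surface measure on the unit sphere $S^{M-1}\subset\mathbb{R}^M$, the integral is over the whole sphere, and $S_M=2\pi^{M/2}/\Gamma(M/2)$ is its total area. $(\cdot\,\cdot)$ denotes the Euclidean inner product. *)

theory Defs
  imports "HOL-Analysis.Analysis"
begin

definition gegenbauer :: "nat \<Rightarrow> real \<Rightarrow> real \<Rightarrow> real" where
  "gegenbauer n \<rho> x =
     (\<Sum>k\<le>n div 2. (-1)^k * pochhammer \<rho> (n - k) / (fact k * fact (n - 2*k)) * (2*x)^(n - 2*k))"

text \<open>Surface measure on the unit sphere of a Euclidean space, defined as the cone
  measure: sigma(A) = DIM * lebesgue-volume of {t x | 0 < t <= 1, x in A}; i.e. the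
  push-forward of DIM times Lebesgue measure on the unit ball under x |-> x/|x|.\<close>
definition sphere_surface_measure :: "'a::euclidean_space measure" where
  "sphere_surface_measure =
     density (distr (restrict_space lborel (ball 0 1)) borel (\<lambda>x. x /\<^sub>R norm x))
             (\<lambda>_. ennreal (real DIM('a)))"

definition sphere_area :: "nat \<Rightarrow> real" where
  "sphere_area M = 2 * pi powr (real M / 2) / Gamma (real M / 2)"

end

theory Submission
  imports Defs
begin

(* The surface measure is the cone measure of the unit ball, so sphere integrals are ball integrals
   of radial extensions, and Lebesgue measure is invariant under plane rotations (each a product of
   three shears).  Hence the moment  M_2J(u) = \<integral> (u\<cdot>\<zeta>)^2J  equals |u|^2J M_2J(e) for a basis vector e,
   and expanding  M_2J(t \<zeta>1 + \<zeta>2) = (t^2 + 2 (\<zeta>1\<cdot>\<zeta>2) t + 1)^J M_2J(e)  in powers of t expresses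
   every mixed moment  \<integral> (\<zeta>1\<cdot>\<zeta>)^n (\<zeta>2\<cdot>\<zeta>)^(2J-n)  through a trinomial coefficient.  The
   identity  \<Sum>_b (b\<cdot>\<zeta>)^2 = 1  on the sphere gives a recursion for M_2J(e), hence its closed form
   with (M/2)_J.  Substituted into the right-hand side, the sum over m collapses, via the partial
   fraction identity  \<Sum>_r (-1)^r C(a,r)/(B+r) = a!/(B)_(a+1), to the explicit coefficients of C^\<rho>_(2l+\<sigma>). *)

section \<open>Sphere integrals as radial integrals over the ball\<close>

definition ball_radial_integral :: "('a::euclidean_space \<Rightarrow> real) \<Rightarrow> real" where
  "ball_radial_integral g =
     integral\<^sup>L (restrict_space lborel (ball (0::'a) 1)) (\<lambda>x. g (x /\<^sub>R norm x))"

lemma sphere_surface_measure_integral: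
  fixes g :: "'a::euclidean_space \<Rightarrow> real"
  assumes [measurable]: "g \<in> borel_measurable borel"
  shows "integral\<^sup>L sphere_surface_measure g = real DIM('a) * ball_radial_integral g"
proof -
  have [measurable]: "(\<lambda>x::'a. x /\<^sub>R norm x) \<in> measurable (restrict_space lborel (ball 0 1)) borel"
    by (rule measurable_restrict_space1) simp
  have "integral\<^sup>L sphere_surface_measure g =
      integral\<^sup>L (distr (restrict_space lborel (ball (0::'a) 1)) borel (\<lambda>x. x /\<^sub>R norm x))
        (\<lambda>x. real DIM('a) *\<^sub>R g x)"
    unfolding sphere_surface_measure_def by (subst integral_density) auto
  also have "\<dots> = real DIM('a) * ball_radial_integral g"
    unfolding ball_radial_integral_def by (subst integral_distr) auto
  finally show ?thesis .
qed

lemma integrable_ball_radial: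
  fixes g :: "'a::euclidean_space \<Rightarrow> real"
  assumes "continuous_on UNIV g"
  shows "integrable (restrict_space lborel (ball (0::'a) 1)) (\<lambda>x. g (x /\<^sub>R norm x))"
proof -
  interpret finite_measure "restrict_space lborel (ball (0::'a) 1)"
    by (intro finite_measureI) (simp add: space_restrict_space emeasure_restrict_space emeasure_ball)
  have "bounded (g ` cball 0 1)"
    by (intro compact_imp_bounded compact_continuous_image continuous_on_subset[OF assms]) auto
  then obtain B where B: "\<And>x. x \<in> cball (0::'a) 1 \<Longrightarrow> norm (g x) \<le> B"
    unfolding bounded_iff by blast
  have "norm (x /\<^sub>R norm x) \<le> 1" for x :: 'a
    by (cases "x = 0") auto
  then have "AE x in restrict_space lborel (ball 0 1). norm (g (x /\<^sub>R norm x)) \<le> B"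
    using B by (intro AE_I2) simp
  moreover have [measurable]: "g \<in> borel_measurable borel"
    using assms by (rule borel_measurable_continuous_onI)
  have "(\<lambda>x. g (x /\<^sub>R norm x)) \<in> borel_measurable (restrict_space lborel (ball (0::'a) 1))"
    by (intro measurable_restrict_space1) measurable
  ultimately show ?thesis
    by (rule integrable_const_bound)
qed

lemma ball_radial_integral_cmult:
  "ball_radial_integral (\<lambda>x. c * g x) = c * ball_radial_integral g"
  unfolding ball_radial_integral_def by simp

lemma ball_radial_integral_sum:
  fixes g :: "'i \<Rightarrow> 'a::euclidean_space \<Rightarrow> real"
  assumes "\<And>i. i \<in> I \<Longrightarrow> continuous_on UNIV (g i)"
  shows "ball_radial_integral (\<lambda>x. \<Sum>i\<in>I. g i x) = (\<Sum>i\<in>I. ball_radial_integral (g i))"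
  unfolding ball_radial_integral_def using integrable_ball_radial[OF assms]
  by (rule Bochner_Integration.integral_sum)

lemma ball_radial_integral_one:
  "ball_radial_integral (\<lambda>x::'a::euclidean_space. 1) = unit_ball_vol DIM('a)"
  by (simp add: ball_radial_integral_def space_restrict_space measure_restrict_space
      measure_def emeasure_ball emeasure_restrict_space)

lemma ball_radial_integral_mult_inner_self:
  fixes g :: "'a::euclidean_space \<Rightarrow> real"
  assumes [measurable]: "g \<in> borel_measurable borel"
  shows "ball_radial_integral (\<lambda>x. g x * (x \<bullet> x)) = ball_radial_integral g"
proof -
  have "AE x in restrict_space lborel (ball (0::'a) 1). x \<noteq> 0"
    by (subst AE_restrict_space_iff) (auto intro: AE_mp[OF AE_lborel_singleton])
  moreover have "(x /\<^sub>R norm x) \<bullet> (x /\<^sub>R norm x) = 1" if "x \<noteq> 0" for x :: 'a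
    using that by (simp add: dot_square_norm)
  ultimately have "AE x in restrict_space lborel (ball (0::'a) 1).
      g (x /\<^sub>R norm x) * ((x /\<^sub>R norm x) \<bullet> (x /\<^sub>R norm x)) = g (x /\<^sub>R norm x)"
    by (auto elim: AE_mp)
  moreover have "(\<lambda>x. g (x /\<^sub>R norm x) * ((x /\<^sub>R norm x) \<bullet> (x /\<^sub>R norm x)))
      \<in> borel_measurable (restrict_space lborel (ball (0::'a) 1))"
    "(\<lambda>x. g (x /\<^sub>R norm x)) \<in> borel_measurable (restrict_space lborel (ball (0::'a) 1))"
    by (intro measurable_restrict_space1; measurable)+
  ultimately show ?thesis
    unfolding ball_radial_integral_def by (intro integral_cong_AE)
qed

section \<open>Invariance under plane rotations\<close>

definition shear :: "'a::euclidean_space \<Rightarrow> 'a \<Rightarrow> real \<Rightarrow> 'a \<Rightarrow> 'a" where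
  "shear b1 b2 a x = x + (a * (x \<bullet> b2)) *\<^sub>R b1"

lemma borel_measurable_shear [measurable]: "shear b1 b2 a \<in> borel_measurable borel"
  unfolding shear_def by (intro borel_measurable_continuous_onI continuous_intros)

lemma nn_integral_lborel_split_coordinate:
  fixes h :: "'a::euclidean_space \<Rightarrow> ennreal" and b :: 'a
  assumes [measurable]: "h \<in> borel_measurable borel" and b: "b \<in> Basis"
  shows "(\<integral>\<^sup>+x. h x \<partial>lborel) =
    (\<integral>\<^sup>+x. (\<integral>\<^sup>+y. h (y *\<^sub>R b + (\<Sum>b'\<in>Basis - {b}. x b' *\<^sub>R b')) \<partial>lborel) \<partial>Pi\<^sub>M (Basis - {b}) (\<lambda>_. lborel))"
proof -
  interpret product_sigma_finite "\<lambda>_. lborel :: real measure" by standard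
  define \<Phi> where "\<Phi> = (\<lambda>f. \<Sum>b'\<in>Basis. f b' *\<^sub>R b' :: 'a)"
  define I where "I = Basis - {b}"
  have BI: "Basis = insert b I" "finite I" "b \<notin> I"
    using b by (auto simp: I_def)
  have [measurable]: "\<Phi> \<in> borel_measurable (Pi\<^sub>M Basis (\<lambda>_. lborel))"
    unfolding \<Phi>_def by measurable
  then have [measurable]: "\<Phi> \<in> borel_measurable (Pi\<^sub>M (insert b I) (\<lambda>_. lborel))"
    using BI by simp
  have "\<Phi> f = f b *\<^sub>R b + (\<Sum>b'\<in>I. f b' *\<^sub>R b')" for f
    unfolding \<Phi>_def using BI by (metis (no_types) sum.insert)
  then have \<Phi>_upd: "\<Phi> (x(b := y)) = y *\<^sub>R b + (\<Sum>b'\<in>I. x b' *\<^sub>R b')" for x y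
    using BI by (auto intro!: sum.cong)
  have "(\<integral>\<^sup>+x. h x \<partial>lborel) = (\<integral>\<^sup>+f. h (\<Phi> f) \<partial>Pi\<^sub>M (insert b I) (\<lambda>_. lborel))"
    by (subst lborel_eq) (simp add: nn_integral_distr BI(1)[symmetric] \<Phi>_def)
  also have "\<dots> = (\<integral>\<^sup>+x. (\<integral>\<^sup>+y. h (\<Phi> (x(b := y))) \<partial>lborel) \<partial>Pi\<^sub>M I (\<lambda>_. lborel))"
    using BI by (subst product_nn_integral_insert) auto
  finally show ?thesis
    unfolding \<Phi>_upd I_def .
qed

lemma nn_integral_lborel_shear:
  fixes h :: "'a::euclidean_space \<Rightarrow> ennreal"
  assumes [measurable]: "h \<in> borel_measurable borel"
    and b: "b1 \<in> Basis" "b2 \<in> Basis" "b1 \<noteq> b2"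
  shows "(\<integral>\<^sup>+x. h (shear b1 b2 a x) \<partial>lborel) = (\<integral>\<^sup>+x. h x \<partial>lborel)"
proof -
  have fibre: "(\<integral>\<^sup>+y. h (shear b1 b2 a (y *\<^sub>R b1 + w)) \<partial>lborel) = (\<integral>\<^sup>+y. h (y *\<^sub>R b1 + w) \<partial>lborel)"
    for w :: 'a
  proof -
    have "shear b1 b2 a (y *\<^sub>R b1 + w) = (y + a * (w \<bullet> b2)) *\<^sub>R b1 + w" for y
      using b by (simp add: shear_def inner_add_left inner_Basis algebra_simps)
    then show ?thesis
      using nn_integral_real_affine[of "\<lambda>y. h (y *\<^sub>R b1 + w)" 1 "a * (w \<bullet> b2)"]
      by (simp add: add.commute)
  qed
  have "(\<integral>\<^sup>+x. h (shear b1 b2 a x) \<partial>lborel) = (\<integral>\<^sup>+x. (\<integral>\<^sup>+y. h (shear b1 b2 a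
      (y *\<^sub>R b1 + (\<Sum>b\<in>Basis - {b1}. x b *\<^sub>R b))) \<partial>lborel) \<partial>Pi\<^sub>M (Basis - {b1}) (\<lambda>_. lborel))"
    using b(1) by (rule nn_integral_lborel_split_coordinate[rotated]) measurable
  also have "\<dots> = (\<integral>\<^sup>+x. h x \<partial>lborel)"
    unfolding fibre using b(1) by (rule nn_integral_lborel_split_coordinate[symmetric, rotated]) measurable
  finally show ?thesis .
qed

lemma distr_lborel_shear:
  fixes b1 b2 :: "'a::euclidean_space"
  assumes "b1 \<in> Basis" "b2 \<in> Basis" "b1 \<noteq> b2"
  shows "distr lborel borel (shear b1 b2 a) = (lborel :: 'a measure)"
proof (rule measure_eqI)
  fix A :: "'a set"
  assume "A \<in> sets (distr lborel borel (shear b1 b2 a))"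
  then have A [measurable]: "A \<in> sets borel"
    by simp
  have "emeasure (distr lborel borel (shear b1 b2 a)) A = emeasure lborel (shear b1 b2 a -` A)"
    by (subst emeasure_distr) auto
  also have "\<dots> = (\<integral>\<^sup>+x. indicator (shear b1 b2 a -` A) x \<partial>lborel)"
    using measurable_sets[OF borel_measurable_shear A] by simp
  also have "\<dots> = (\<integral>\<^sup>+x. indicator A (shear b1 b2 a x) \<partial>lborel)"
    by (simp add: indicator_vimage)
  also have "\<dots> = emeasure lborel A"
    using assms by (subst nn_integral_lborel_shear) auto
  finally show "emeasure (distr lborel borel (shear b1 b2 a)) A = emeasure lborel A" .
qed simp

definition plane_rotation :: "'a::euclidean_space \<Rightarrow> 'a \<Rightarrow> real \<Rightarrow> real \<Rightarrow> 'a \<Rightarrow> 'a" where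
  "plane_rotation b1 b2 c s x =
     x + ((c - 1) * (x \<bullet> b1) - s * (x \<bullet> b2)) *\<^sub>R b1 + (s * (x \<bullet> b1) + (c - 1) * (x \<bullet> b2)) *\<^sub>R b2"

lemma borel_measurable_plane_rotation [measurable]: "plane_rotation b1 b2 c s \<in> borel_measurable borel"
  unfolding plane_rotation_def by (intro borel_measurable_continuous_onI continuous_intros)

(* t = tan(\<theta>/2) *)
lemma plane_rotation_eq_shears:
  fixes b1 b2 :: "'a::euclidean_space"
  assumes b: "b1 \<in> Basis" "b2 \<in> Basis" "b1 \<noteq> b2" and cs: "c\<^sup>2 + s\<^sup>2 = 1" "c \<noteq> -1"
  defines "t \<equiv> s / (1 + c)"
  shows "plane_rotation b1 b2 c s = shear b1 b2 (-t) \<circ> shear b2 b1 s \<circ> shear b1 b2 (-t)"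
proof
  fix x
  have o: "b1 \<bullet> b2 = 0" "b2 \<bullet> b1 = 0" "b1 \<bullet> b1 = 1" "b2 \<bullet> b2 = 1"
    using b by (auto simp: inner_Basis)
  have "1 + c \<noteq> 0"
    using cs by auto
  then have tc: "t * (1 + c) = s"
    by (simp add: t_def)
  have st: "s * t = 1 - c"
  proof -
    have "s * t * (1 + c) = (1 - c) * (1 + c)"
      using cs tc by (simp add: algebra_simps power2_eq_square flip: mult.assoc)
    then show ?thesis
      using \<open>1 + c \<noteq> 0\<close> by simp
  qed
  define u where "u = x \<bullet> b1"
  define v where "v = x \<bullet> b2"
  define x1 where "x1 = shear b1 b2 (-t) x"
  define x2 where "x2 = shear b2 b1 s x1"
  have x1: "x1 = x + (-t * v) *\<^sub>R b1" "x1 \<bullet> b1 = u - t * v" "x1 \<bullet> b2 = v"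
    by (simp_all add: x1_def shear_def inner_diff_left o u_def v_def)
  have x2: "x2 = x1 + (s * (u - t * v)) *\<^sub>R b2" "x2 \<bullet> b2 = v + s * (u - t * v)"
    by (simp_all add: x2_def shear_def inner_add_left o x1(2,3))
  have coeff1: "-t * v - t * (v + s * (u - t * v)) = (c - 1) * u - s * v"
    using st tc by algebra
  have coeff2: "s * (u - t * v) = s * u + (c - 1) * v"
    using st by algebra
  have "(shear b1 b2 (-t) \<circ> shear b2 b1 s \<circ> shear b1 b2 (-t)) x
      = x2 + (-t * (v + s * (u - t * v))) *\<^sub>R b1"
    unfolding comp_def x1_def[symmetric] x2_def[symmetric] shear_def[of _ _ _ x2] x2(2) ..
  also have "\<dots> = x + (-t * v - t * (v + s * (u - t * v))) *\<^sub>R b1 + (s * (u - t * v)) *\<^sub>R b2"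
    unfolding x2(1) x1(1) by (simp add: algebra_simps) (simp flip: scaleR_add_left)
  also have "\<dots> = plane_rotation b1 b2 c s x"
    unfolding coeff1 unfolding coeff2 by (simp only: plane_rotation_def flip: u_def v_def)
  finally show "plane_rotation b1 b2 c s x = (shear b1 b2 (-t) \<circ> shear b2 b1 s \<circ> shear b1 b2 (-t)) x"
    by simp
qed

lemma distr_lborel_plane_rotation:
  fixes b1 b2 :: "'a::euclidean_space"
  assumes b: "b1 \<in> Basis" "b2 \<in> Basis" "b1 \<noteq> b2" and cs: "c\<^sup>2 + s\<^sup>2 = 1" "c \<noteq> -1"
  shows "distr lborel borel (plane_rotation b1 b2 c s) = (lborel :: 'a measure)"
proof -
  define t where "t = s / (1 + c)"
  have "distr lborel borel (plane_rotation b1 b2 c s) =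
      distr (distr (distr lborel borel (shear b1 b2 (-t))) borel (shear b2 b1 s)) borel (shear b1 b2 (-t))"
    unfolding plane_rotation_eq_shears[OF b cs] t_def by (simp add: distr_distr comp_assoc)
  also have "\<dots> = lborel"
    using b by (simp add: distr_lborel_shear)
  finally show ?thesis .
qed

lemma inner_plane_rotation:
  fixes b1 b2 :: "'a::euclidean_space"
  assumes b: "b1 \<in> Basis" "b2 \<in> Basis" "b1 \<noteq> b2" and cs: "c\<^sup>2 + s\<^sup>2 = 1"
  shows "plane_rotation b1 b2 c s x \<bullet> plane_rotation b1 b2 c s y = x \<bullet> y"
proof -
  have o: "b1 \<bullet> b2 = 0" "b2 \<bullet> b1 = 0" "b1 \<bullet> b1 = 1" "b2 \<bullet> b2 = 1"
    using b by (auto simp: inner_Basis)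
  define u where "u = x \<bullet> b1"
  define v where "v = x \<bullet> b2"
  define u' where "u' = y \<bullet> b1"
  define v' where "v' = y \<bullet> b2"
  have sym: "y \<bullet> x = x \<bullet> y" "b1 \<bullet> x = u" "b2 \<bullet> x = v" "b1 \<bullet> y = u'" "b2 \<bullet> y = v'"
    by (auto simp: inner_commute u_def v_def u'_def v'_def)
  show ?thesis
    unfolding plane_rotation_def using cs
    by (simp add: inner_add_left inner_add_right o sym flip: u_def v_def u'_def v'_def) algebra
qed

lemma norm_plane_rotation:
  fixes b1 b2 :: "'a::euclidean_space"
  assumes "b1 \<in> Basis" "b2 \<in> Basis" "b1 \<noteq> b2" "c\<^sup>2 + s\<^sup>2 = 1"
  shows "norm (plane_rotation b1 b2 c s x) = norm x"
  using inner_plane_rotation[OF assms, of x x] by (simp add: norm_eq_sqrt_inner)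

lemma plane_rotation_scaleR: "plane_rotation b1 b2 c s (a *\<^sub>R x) = a *\<^sub>R plane_rotation b1 b2 c s x"
  unfolding plane_rotation_def by (simp add: algebra_simps)

lemma ball_radial_integral_plane_rotation:
  fixes b1 b2 :: "'a::euclidean_space" and g :: "'a \<Rightarrow> real"
  assumes b: "b1 \<in> Basis" "b2 \<in> Basis" "b1 \<noteq> b2" and cs: "c\<^sup>2 + s\<^sup>2 = 1" "c \<noteq> -1"
    and [measurable]: "g \<in> borel_measurable borel"
  shows "ball_radial_integral (\<lambda>x. g (plane_rotation b1 b2 c s x)) = ball_radial_integral g"
proof -
  let ?R = "plane_rotation b1 b2 c s"
  let ?f = "\<lambda>y. indicator (ball (0::'a) 1) y *\<^sub>R g (y /\<^sub>R norm y)"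
  have norm_R: "norm (?R x) = norm x" for x
    using norm_plane_rotation[OF b cs(1)] .
  have ball: "ball (0::'a) 1 \<inter> space lborel \<in> sets lborel"
    and [measurable]: "ball (0::'a) 1 \<in> sets borel"
    by simp_all
  have "ball_radial_integral (\<lambda>x. g (?R x)) = integral\<^sup>L lborel (\<lambda>x. ?f (?R x))"
    unfolding ball_radial_integral_def integral_restrict_space[OF ball]
    by (intro Bochner_Integration.integral_cong)
      (simp_all add: indicator_def norm_R plane_rotation_scaleR)
  also have "\<dots> = integral\<^sup>L (distr lborel borel ?R) ?f"
    by (rule integral_distr[symmetric]) measurable
  also have "\<dots> = ball_radial_integral g"
    unfolding distr_lborel_plane_rotation[OF b cs] ball_radial_integral_def
    by (rule integral_restrict_space[OF ball, symmetric])
  finally show ?thesis .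
qed

definition trinomial_coeff :: "nat \<Rightarrow> real \<Rightarrow> nat \<Rightarrow> real" where
  "trinomial_coeff J x p =
     (\<Sum>k\<le>J. \<Sum>a\<le>J - k. if p = 2 * a + k then real (J choose k) * real ((J - k) choose a) * (2 * x) ^ k else 0)"

lemma trinomial_expansion:
  fixes t x :: real
  shows "(t\<^sup>2 + 2 * x * t + 1) ^ J = (\<Sum>p\<le>2 * J. trinomial_coeff J x p * t ^ p)"
proof -
  define f where "f k a = real (J choose k) * real ((J - k) choose a) * (2 * x) ^ k" for k a
  have "(t\<^sup>2 + 2 * x * t + 1) ^ J = (\<Sum>k\<le>J. real (J choose k) * (2 * x * t) ^ k * (t\<^sup>2 + 1) ^ (J - k))"
    using binomial_ring[of "2 * x * t" "t\<^sup>2 + 1" J] by (simp add: algebra_simps)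
  also have "\<dots> = (\<Sum>k\<le>J. \<Sum>a\<le>J - k. f k a * t ^ (2 * a + k))"
  proof (intro sum.cong refl)
    fix k
    have "(t\<^sup>2 + 1) ^ (J - k) = (\<Sum>a\<le>J - k. real ((J - k) choose a) * t ^ (2 * a))"
      using binomial_ring[of "t\<^sup>2" 1 "J - k"] by (simp add: power_mult)
    then show "real (J choose k) * (2 * x * t) ^ k * (t\<^sup>2 + 1) ^ (J - k) = (\<Sum>a\<le>J - k. f k a * t ^ (2 * a + k))"
      by (simp add: f_def sum_distrib_left power_mult_distrib power_add algebra_simps)
  qed
  also have "\<dots> = (\<Sum>k\<le>J. \<Sum>a\<le>J - k. \<Sum>p\<le>2 * J. if p = 2 * a + k then f k a * t ^ p else 0)"
  proof (intro sum.cong refl)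
    fix k a
    assume "k \<in> {..J}" "a \<in> {..J - k}"
    then have "2 * a + k \<in> {..2 * J}"
      by auto
    then show "f k a * t ^ (2 * a + k) = (\<Sum>p\<le>2 * J. if p = 2 * a + k then f k a * t ^ p else 0)"
      by (simp only: sum.delta finite_atMost if_True)
  qed
  also have "\<dots> = (\<Sum>k\<le>J. \<Sum>p\<le>2 * J. \<Sum>a\<le>J - k. if p = 2 * a + k then f k a * t ^ p else 0)"
    by (rule sum.cong[OF refl], rule sum.swap)
  also have "\<dots> = (\<Sum>p\<le>2 * J. \<Sum>k\<le>J. \<Sum>a\<le>J - k. if p = 2 * a + k then f k a * t ^ p else 0)"
    by (rule sum.swap)
  also have "\<dots> = (\<Sum>p\<le>2 * J. trinomial_coeff J x p * t ^ p)"
    unfolding trinomial_coeff_def f_def sum_distrib_right by (intro sum.cong refl) simp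
  finally show ?thesis .
qed

lemma trinomial_coeff_eq_sum_binomial:
  "trinomial_coeff J x p =
     (\<Sum>a\<le>p div 2. if p - a \<le> J
        then real (J choose (p - 2 * a)) * real ((J - (p - 2 * a)) choose a) * (2 * x) ^ (p - 2 * a) else 0)"
proof -
  define f where "f k a = real (J choose k) * real ((J - k) choose a) * (2 * x) ^ k" for k a
  have "trinomial_coeff J x p = (\<Sum>k\<le>J. \<Sum>a\<le>J - k. if p = 2 * a + k then f k a else 0)"
    unfolding trinomial_coeff_def f_def ..
  also have "\<dots> = (\<Sum>k\<le>J. \<Sum>a\<le>J. if a \<le> J - k \<and> p = 2 * a + k then f k a else 0)"
    by (intro sum.cong refl sum.mono_neutral_cong_left) auto
  also have "\<dots> = (\<Sum>a\<le>J. \<Sum>k\<le>J. if a \<le> J - k \<and> p = 2 * a + k then f k a else 0)"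
    by (rule sum.swap)
  also have "\<dots> = (\<Sum>a\<le>J. if 2 * a \<le> p \<and> p - a \<le> J then f (p - 2 * a) a else 0)"
  proof (intro sum.cong refl)
    fix a
    have "(\<Sum>k\<le>J. if a \<le> J - k \<and> p = 2 * a + k then f k a else 0)
        = (\<Sum>k\<le>J. if k = p - 2 * a then (if 2 * a \<le> p \<and> p - a \<le> J then f k a else 0) else 0)"
      by (intro sum.cong refl) auto
    also have "\<dots> = (if 2 * a \<le> p \<and> p - a \<le> J then f (p - 2 * a) a else 0)"
      by (auto simp: sum.delta)
    finally show "(\<Sum>k\<le>J. if a \<le> J - k \<and> p = 2 * a + k then f k a else 0)
        = (if 2 * a \<le> p \<and> p - a \<le> J then f (p - 2 * a) a else 0)" .
  qed
  also have "\<dots> = (\<Sum>a\<le>p div 2. if p - a \<le> J then f (p - 2 * a) a else 0)"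
  proof -
    have "{a \<in> {..J}. 2 * a \<le> p \<and> p - a \<le> J} = {a \<in> {..p div 2}. p - a \<le> J}"
      by auto
    then show ?thesis
      by (simp only: sum.inter_filter[OF finite_atMost, symmetric])
  qed
  finally show ?thesis
    unfolding f_def .
qed

lemma trinomial_coeff_closed_form:
  "trinomial_coeff J x p =
     (\<Sum>a\<le>p div 2. if p - a \<le> J
        then fact J / (fact (p - 2 * a) * fact a * fact (J + a - p)) * (2 * x) ^ (p - 2 * a) else 0)"
  unfolding trinomial_coeff_eq_sum_binomial
proof (intro sum.cong refl if_cong)
  fix a
  assume "a \<in> {..p div 2}" "p - a \<le> J"
  then have le: "p - 2 * a \<le> J" "a \<le> J - (p - 2 * a)" and diff: "J - (p - 2 * a) - a = J + a - p"
    by auto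
  have "real (J choose (p - 2 * a)) * real ((J - (p - 2 * a)) choose a)
      = fact J / (fact (p - 2 * a) * fact (J - (p - 2 * a)))
        * (fact (J - (p - 2 * a)) / (fact a * fact (J + a - p)))"
    by (simp only: binomial_fact[OF le(1)] binomial_fact[OF le(2)] diff)
  then show "real (J choose (p - 2 * a)) * real ((J - (p - 2 * a)) choose a) * (2 * x) ^ (p - 2 * a)
      = fact J / (fact (p - 2 * a) * fact a * fact (J + a - p)) * (2 * x) ^ (p - 2 * a)"
    by simp
qed

lemma trinomial_coeff_zero_even: "trinomial_coeff J 0 (2 * a) = real (J choose a)"
proof -
  have "trinomial_coeff J 0 (2 * a) =
      (\<Sum>a'\<le>a. if a' = a then (if a \<le> J then fact J / (fact a * fact (J - a)) else 0) else 0)"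
    unfolding trinomial_coeff_closed_form by (intro sum.cong) auto
  also have "\<dots> = real (J choose a)"
    by (simp add: binomial_fact)
  finally show ?thesis .
qed

section \<open>Moments of linear forms\<close>

definition power_moment :: "nat \<Rightarrow> 'a::euclidean_space \<Rightarrow> real" where
  "power_moment k u = ball_radial_integral (\<lambda>\<zeta>. (u \<bullet> \<zeta>) ^ k)"

lemma power_moment_plane_rotation:
  fixes b1 b2 :: "'a::euclidean_space"
  assumes b: "b1 \<in> Basis" "b2 \<in> Basis" "b1 \<noteq> b2" and cs: "c\<^sup>2 + s\<^sup>2 = 1" "c \<noteq> -1"
  shows "power_moment k (plane_rotation b1 b2 c s u) = power_moment k u"
proof -
  have "power_moment k u =
      ball_radial_integral (\<lambda>\<zeta>. (plane_rotation b1 b2 c s u \<bullet> plane_rotation b1 b2 c s \<zeta>) ^ k)"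
    unfolding inner_plane_rotation[OF b cs(1)] power_moment_def ..
  also have "\<dots> = power_moment k (plane_rotation b1 b2 c s u)"
    unfolding power_moment_def by (rule ball_radial_integral_plane_rotation[OF b cs]) measurable
  finally show ?thesis ..
qed

lemma power_moment_scaleR: "power_moment k (a *\<^sub>R u) = a ^ k * power_moment k u"
  unfolding power_moment_def by (simp add: power_mult_distrib ball_radial_integral_cmult)

lemma plane_rotation_clears_coordinate:
  fixes e b u :: "'a::euclidean_space"
  assumes e: "e \<in> Basis" and b: "b \<in> Basis" "b \<noteq> e" "u \<bullet> b \<noteq> 0"
  obtains c s where "c\<^sup>2 + s\<^sup>2 = 1" "c \<noteq> -1" "plane_rotation e b c s u \<bullet> b = 0"
proof
  define r where "r = sqrt ((u \<bullet> e)\<^sup>2 + (u \<bullet> b)\<^sup>2)"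
  have "r > 0"
    unfolding r_def using b(3) by (simp add: add_nonneg_pos)
  have r2: "r\<^sup>2 = (u \<bullet> e)\<^sup>2 + (u \<bullet> b)\<^sup>2"
    unfolding r_def by simp
  show cs: "(u \<bullet> e / r)\<^sup>2 + (- (u \<bullet> b) / r)\<^sup>2 = 1"
    using \<open>r > 0\<close> b(3) by (simp add: power_divide r2 flip: add_divide_distrib)
  show "u \<bullet> e / r \<noteq> -1"
  proof
    assume "u \<bullet> e / r = -1"
    with cs have "(u \<bullet> b / r)\<^sup>2 = 0"
      by simp
    with b(3) \<open>r > 0\<close> show False
      by simp
  qed
  show "plane_rotation e b (u \<bullet> e / r) (- (u \<bullet> b) / r) u \<bullet> b = 0"
    using e b by (simp add: plane_rotation_def inner_add_left inner_Basis algebra_simps)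
qed

lemma power_moment_even:
  fixes u e :: "'a::euclidean_space"
  assumes k: "even k" and e: "e \<in> Basis"
  shows "power_moment k u = norm u ^ k * power_moment k e"
proof (induction "card {b \<in> Basis - {e}. u \<bullet> b \<noteq> 0}" arbitrary: u)
  case 0
  then have "{b \<in> Basis - {e}. u \<bullet> b \<noteq> 0} = {}"
    by simp
  then have "u = (\<Sum>b\<in>Basis. if b = e then (u \<bullet> e) *\<^sub>R e else 0)"
    by (subst euclidean_representation[symmetric]) (intro sum.cong, auto)
  then have u: "u = (u \<bullet> e) *\<^sub>R e"
    using e by simp
  have "power_moment k u = \<bar>u \<bullet> e\<bar> ^ k * power_moment k e"
    using k by (subst u) (simp add: power_moment_scaleR power_even_abs)
  also have "\<bar>u \<bullet> e\<bar> = norm u"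
    using e by (subst (2) u) simp
  finally show ?case .
next
  case (Suc n)
  then obtain b where b: "b \<in> Basis" "b \<noteq> e" "u \<bullet> b \<noteq> 0"
    by (metis (mono_tags, lifting) Diff_iff card.empty empty_Collect_eq insertI1 nat.distinct(1))
  then obtain c s where cs: "c\<^sup>2 + s\<^sup>2 = 1" "c \<noteq> -1" and clear: "plane_rotation e b c s u \<bullet> b = 0"
    using e plane_rotation_clears_coordinate by metis
  define u' where "u' = plane_rotation e b c s u"
  have "u' \<bullet> b' = u \<bullet> b'" if "b' \<in> Basis" "b' \<noteq> e" "b' \<noteq> b" for b'
    using that b e unfolding u'_def plane_rotation_def by (simp add: inner_add_left inner_Basis)
  with clear have "{b' \<in> Basis - {e}. u' \<bullet> b' \<noteq> 0} = {b' \<in> Basis - {e}. u \<bullet> b' \<noteq> 0} - {b}"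
    unfolding u'_def by (auto, metis)
  with Suc.hyps(2) b have "n = card {b' \<in> Basis - {e}. u' \<bullet> b' \<noteq> 0}"
    by (simp add: card_Diff_singleton)
  then have "power_moment k u' = norm u' ^ k * power_moment k e"
    by (rule Suc.hyps(1))
  moreover have "norm u' = norm u"
    unfolding u'_def using e b cs by (intro norm_plane_rotation) auto
  moreover have "power_moment k u' = power_moment k u"
    unfolding u'_def using e b cs by (intro power_moment_plane_rotation) auto
  ultimately show ?case
    by simp
qed

lemma power_moment_add_scaleR:
  fixes p q :: "'a::euclidean_space"
  shows "power_moment N (t *\<^sub>R p + q) =
    (\<Sum>k\<le>N. (real (N choose k) * ball_radial_integral (\<lambda>\<zeta>. (p \<bullet> \<zeta>) ^ k * (q \<bullet> \<zeta>) ^ (N - k))) * t ^ k)"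
proof -
  have "power_moment N (t *\<^sub>R p + q) =
      ball_radial_integral (\<lambda>\<zeta>. \<Sum>k\<le>N. (real (N choose k) * t ^ k) * ((p \<bullet> \<zeta>) ^ k * (q \<bullet> \<zeta>) ^ (N - k)))"
    unfolding power_moment_def inner_add_left inner_scaleR_left binomial_ring
    by (simp add: power_mult_distrib mult_ac)
  also have "\<dots> = (\<Sum>k\<le>N. ball_radial_integral (\<lambda>\<zeta>. (real (N choose k) * t ^ k) * ((p \<bullet> \<zeta>) ^ k * (q \<bullet> \<zeta>) ^ (N - k))))"
    by (rule ball_radial_integral_sum) (intro continuous_intros)
  also have "\<dots> = (\<Sum>k\<le>N. (real (N choose k) * t ^ k) * ball_radial_integral (\<lambda>\<zeta>. (p \<bullet> \<zeta>) ^ k * (q \<bullet> \<zeta>) ^ (N - k)))"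
    by (simp only: ball_radial_integral_cmult)
  finally show ?thesis
    by (simp add: mult_ac)
qed

lemma mixed_moment_eq_trinomial_coeff:
  fixes p q e :: "'a::euclidean_space"
  assumes "norm p = 1" "norm q = 1" "n \<le> 2 * J" "e \<in> Basis"
  shows "real ((2 * J) choose n) * ball_radial_integral (\<lambda>\<zeta>. (p \<bullet> \<zeta>) ^ n * (q \<bullet> \<zeta>) ^ (2 * J - n))
    = trinomial_coeff J (p \<bullet> q) n * power_moment (2 * J) e"
proof -
  have "(\<Sum>k\<le>2 * J. (real ((2 * J) choose k) * ball_radial_integral (\<lambda>\<zeta>. (p \<bullet> \<zeta>) ^ k * (q \<bullet> \<zeta>) ^ (2 * J - k))) * t ^ k)
      = (\<Sum>k\<le>2 * J. (trinomial_coeff J (p \<bullet> q) k * power_moment (2 * J) e) * t ^ k)" for t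
  proof -
    have "p \<bullet> p = 1" "q \<bullet> q = 1"
      using assms(1,2) by (simp_all add: norm_eq_1)
    then have "norm (t *\<^sub>R p + q) ^ 2 = t\<^sup>2 + 2 * (p \<bullet> q) * t + 1"
      unfolding power2_norm_eq_inner
      by (simp add: inner_add_left inner_add_right inner_commute[of q p] power2_eq_square algebra_simps)
    then have "norm (t *\<^sub>R p + q) ^ (2 * J) = (\<Sum>k\<le>2 * J. trinomial_coeff J (p \<bullet> q) k * t ^ k)"
      by (simp add: power_mult trinomial_expansion)
    moreover have "power_moment (2 * J) (t *\<^sub>R p + q) = norm (t *\<^sub>R p + q) ^ (2 * J) * power_moment (2 * J) e"
      using assms(4) by (intro power_moment_even) auto
    ultimately have "power_moment (2 * J) (t *\<^sub>R p + q) = (\<Sum>k\<le>2 * J. trinomial_coeff J (p \<bullet> q) k * t ^ k) * power_moment (2 * J) e"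
      by simp
    then show ?thesis
      unfolding power_moment_add_scaleR by (simp add: sum_distrib_left sum_distrib_right mult_ac)
  qed
  then have "\<forall>k\<le>2 * J. real ((2 * J) choose k) * ball_radial_integral (\<lambda>\<zeta>. (p \<bullet> \<zeta>) ^ k * (q \<bullet> \<zeta>) ^ (2 * J - k))
      = trinomial_coeff J (p \<bullet> q) k * power_moment (2 * J) e"
    by (subst polyfun_eq_coeffs[symmetric]) blast
  then show ?thesis
    using assms(3) by blast
qed

lemma mixed_moment_Basis:
  fixes e b :: "'a::euclidean_space"
  assumes "e \<in> Basis" "b \<in> Basis" "e \<noteq> b"
  shows "ball_radial_integral (\<lambda>\<zeta>. (e \<bullet> \<zeta>) ^ (2 * j) * (b \<bullet> \<zeta>)\<^sup>2) = power_moment (2 * j + 2) e / (2 * real j + 1)"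
proof -
  have "(2 * Suc j) choose (2 * j) = (2 * Suc j) choose 2"
    by (subst binomial_symmetric) auto
  then have "real ((2 * Suc j) choose (2 * j)) = real (Suc j) * (2 * real j + 1)"
    by (simp add: choose_two algebra_simps)
  moreover have "real ((2 * Suc j) choose (2 * j)) * ball_radial_integral (\<lambda>\<zeta>. (e \<bullet> \<zeta>) ^ (2 * j) * (b \<bullet> \<zeta>)\<^sup>2)
      = real (Suc j) * power_moment (2 * j + 2) e"
    using mixed_moment_eq_trinomial_coeff[of e b "2 * j" "Suc j" e] assms
    by (simp add: inner_Basis trinomial_coeff_zero_even mult_2_right)
  ultimately have "real (Suc j) * ((2 * real j + 1) * ball_radial_integral (\<lambda>\<zeta>. (e \<bullet> \<zeta>) ^ (2 * j) * (b \<bullet> \<zeta>)\<^sup>2))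
      = real (Suc j) * power_moment (2 * j + 2) e"
    by (simp only: mult.assoc)
  then have "(2 * real j + 1) * ball_radial_integral (\<lambda>\<zeta>. (e \<bullet> \<zeta>) ^ (2 * j) * (b \<bullet> \<zeta>)\<^sup>2)
      = power_moment (2 * j + 2) e"
    by (rule mult_left_cancel[THEN iffD1, rotated]) simp
  moreover have "2 * real j + 1 \<noteq> 0"
    by linarith
  ultimately show ?thesis
    by (simp add: eq_divide_eq mult.commute)
qed

lemma power_moment_Basis_Suc:
  fixes e :: "'a::euclidean_space"
  assumes e: "e \<in> Basis"
  shows "power_moment (2 * j) e = power_moment (2 * j + 2) e * (2 * real j + real DIM('a)) / (2 * real j + 1)"
proof -
  have "power_moment (2 * j) e = ball_radial_integral (\<lambda>\<zeta>. (e \<bullet> \<zeta>) ^ (2 * j) * (\<zeta> \<bullet> \<zeta>))"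
    unfolding power_moment_def by (rule ball_radial_integral_mult_inner_self[symmetric]) measurable
  also have "\<dots> = ball_radial_integral (\<lambda>\<zeta>. \<Sum>b\<in>Basis. (e \<bullet> \<zeta>) ^ (2 * j) * (b \<bullet> \<zeta>)\<^sup>2)"
  proof -
    have "\<zeta> \<bullet> \<zeta> = (\<Sum>b\<in>Basis. (b \<bullet> \<zeta>)\<^sup>2)" for \<zeta> :: 'a
      by (simp add: euclidean_inner[of \<zeta> \<zeta>] power2_eq_square inner_commute)
    then show ?thesis
      by (simp add: sum_distrib_left)
  qed
  also have "\<dots> = (\<Sum>b\<in>Basis. ball_radial_integral (\<lambda>\<zeta>. (e \<bullet> \<zeta>) ^ (2 * j) * (b \<bullet> \<zeta>)\<^sup>2))"
    by (rule ball_radial_integral_sum) (intro continuous_intros)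
  also have "\<dots> = power_moment (2 * j + 2) e + (\<Sum>b\<in>Basis - {e}. power_moment (2 * j + 2) e / (2 * real j + 1))"
  proof -
    have "ball_radial_integral (\<lambda>\<zeta>. (e \<bullet> \<zeta>) ^ (2 * j) * (e \<bullet> \<zeta>)\<^sup>2) = power_moment (2 * j + 2) e"
      unfolding power_moment_def power_add ..
    moreover have "(\<Sum>b\<in>Basis - {e}. ball_radial_integral (\<lambda>\<zeta>. (e \<bullet> \<zeta>) ^ (2 * j) * (b \<bullet> \<zeta>)\<^sup>2))
        = (\<Sum>b\<in>Basis - {e}. power_moment (2 * j + 2) e / (2 * real j + 1))"
      using e by (intro sum.cong refl mixed_moment_Basis) auto
    ultimately show ?thesis
      using e by (simp add: sum.remove)
  qed
  also have "\<dots> = power_moment (2 * j + 2) e * (2 * real j + real DIM('a)) / (2 * real j + 1)"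
    using e by (simp add: card_Diff_singleton of_nat_diff DIM_positive field_simps)
  finally show ?thesis .
qed

lemma power_moment_Basis:
  fixes e :: "'a::euclidean_space"
  assumes "e \<in> Basis"
  shows "power_moment (2 * J) e * pochhammer (real DIM('a) / 2) J = unit_ball_vol DIM('a) * pochhammer (1 / 2) J"
proof (induction J)
  case 0
  show ?case
    by (simp add: power_moment_def ball_radial_integral_one)
next
  case (Suc j)
  have "power_moment (2 * j + 2) e * pochhammer (real DIM('a) / 2) (Suc j)
      = power_moment (2 * j + 2) e * (2 * real j + real DIM('a)) / (2 * real j + 1)
        * pochhammer (real DIM('a) / 2) j * ((2 * real j + 1) / 2)"
    by (simp add: pochhammer_Suc field_simps)
  also have "\<dots> = power_moment (2 * j) e * pochhammer (real DIM('a) / 2) j * ((2 * real j + 1) / 2)"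
    by (simp only: power_moment_Basis_Suc[OF assms, symmetric])
  also have "\<dots> = unit_ball_vol DIM('a) * pochhammer (1 / 2) (Suc j)"
    unfolding Suc.IH by (simp add: pochhammer_Suc field_simps)
  finally show ?case
    by (simp add: mult_2_right)
qed

section \<open>The Gegenbauer coefficients\<close>

lemma add_of_nat_notin_nonpos_Ints:
  fixes B :: real
  assumes "B \<notin> \<int>\<^sub>\<le>\<^sub>0"
  shows "B + real k \<notin> \<int>\<^sub>\<le>\<^sub>0"
  using assms nonpos_Ints_diff_Nats[of "B + real k" "real k"] by auto

lemma sum_alternating_binomial_div_Suc:
  fixes B :: real
  shows "(\<Sum>r\<le>Suc a. (-1) ^ r * real (Suc a choose r) / (B + real r))
    = (\<Sum>r\<le>a. (-1) ^ r * real (a choose r) / (B + real r))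
      - (\<Sum>r\<le>a. (-1) ^ r * real (a choose r) / (B + 1 + real r))"
proof -
  define g where "g b r = (-1) ^ r / (b + real r)" for b r
  have g_Suc: "g B (Suc r) = - g (B + 1) r" for r
    by (simp add: g_def algebra_simps)
  have shift: "(\<Sum>r\<le>Suc a. real (a choose r) * g B r) = g B 0 + (\<Sum>r\<le>a. real (a choose Suc r) * g B (Suc r))"
    by (subst sum.atMost_Suc_shift) simp
  have "(\<Sum>r\<le>Suc a. real (Suc a choose r) * g B r)
      = (\<Sum>r\<le>Suc a. real (a choose r) * g B r) + (\<Sum>r\<le>a. real (a choose r) * g B (Suc r))"
    unfolding shift by (subst sum.atMost_Suc_shift) (simp add: sum.distrib algebra_simps)
  also have "\<dots> = (\<Sum>r\<le>a. real (a choose r) * g B r) - (\<Sum>r\<le>a. real (a choose r) * g (B + 1) r)"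
    by (simp add: g_Suc sum_negf)
  finally show ?thesis
    by (simp add: g_def mult.commute)
qed

lemma sum_alternating_binomial_div:
  fixes B :: real
  assumes "B \<notin> \<int>\<^sub>\<le>\<^sub>0"
  shows "(\<Sum>r\<le>a. (-1) ^ r * real (a choose r) / (B + real r)) = fact a / pochhammer B (Suc a)"
  using assms
proof (induction a arbitrary: B)
  case 0
  then show ?case
    by simp
next
  case (Suc a)
  have B: "B \<noteq> 0" "B + 1 \<notin> \<int>\<^sub>\<le>\<^sub>0" "B + real (Suc a) \<noteq> 0"
    using Suc.prems add_of_nat_notin_nonpos_Ints[OF Suc.prems, of 1]
      add_of_nat_notin_nonpos_Ints[OF Suc.prems, of "Suc a"]
    by auto
  have "pochhammer B (Suc a) \<noteq> 0" "pochhammer (B + 1) (Suc a) \<noteq> 0"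
    using Suc.prems B(2) by (auto simp: pochhammer_eq_0_iff)
  moreover have R: "fact a * (B + real (Suc a)) / pochhammer B (Suc (Suc a))
      = fact a * (B + real (Suc a)) / (pochhammer B (Suc a) * (B + real (Suc a)))"
    "fact a * B / pochhammer B (Suc (Suc a)) = fact a * B / (B * pochhammer (B + 1) (Suc a))"
    by (simp only: pochhammer_Suc, simp only: pochhammer_rec)
  ultimately have "fact a * (B + real (Suc a)) / pochhammer B (Suc (Suc a)) = fact a / pochhammer B (Suc a)"
    and "fact a * B / pochhammer B (Suc (Suc a)) = fact a / pochhammer (B + 1) (Suc a)"
    using B(1,3) by (simp_all only: R) simp_all
  moreover have "fact (Suc a) = fact a * (B + real (Suc a)) - fact a * B"
    by (simp add: algebra_simps)
  ultimately have "fact a / pochhammer B (Suc a) - fact a / pochhammer (B + 1) (Suc a)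
      = fact (Suc a) / pochhammer B (Suc (Suc a))"
    by (simp only: diff_divide_distrib)
  then show ?case
    unfolding sum_alternating_binomial_div_Suc Suc.IH[OF Suc.prems] Suc.IH[OF B(2)] .
qed

lemma sum_alternating_pochhammer_div:
  fixes \<rho> :: real
  assumes \<rho>: "\<rho> \<notin> \<int>\<^sub>\<le>\<^sub>0" and "a \<le> n"
  shows "(\<Sum>r\<le>a. (-1) ^ r * pochhammer \<rho> (n + 1) / (fact (a - r) * fact r * (\<rho> + real (n - a + r))))
    = pochhammer \<rho> (n - a)"
proof -
  define B where "B = \<rho> + real (n - a)"
  have B: "B \<notin> \<int>\<^sub>\<le>\<^sub>0"
    unfolding B_def using \<rho> by (rule add_of_nat_notin_nonpos_Ints)
  have "(\<Sum>r\<le>a. (-1) ^ r * pochhammer \<rho> (n + 1) / (fact (a - r) * fact r * (\<rho> + real (n - a + r))))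
      = pochhammer \<rho> (n + 1) / fact a * (\<Sum>r\<le>a. (-1) ^ r * real (a choose r) / (B + real r))"
    unfolding sum_distrib_left
    by (intro sum.cong refl) (simp add: B_def binomial_fact field_simps)
  also have "\<dots> = pochhammer \<rho> (n + 1) / pochhammer B (Suc a)"
    using B by (simp add: sum_alternating_binomial_div)
  also have "\<dots> = pochhammer \<rho> (n - a)"
  proof -
    have "pochhammer \<rho> (n + 1) = pochhammer \<rho> (n - a) * pochhammer B (Suc a)"
      using pochhammer_product'[of \<rho> "n - a" "Suc a"] \<open>a \<le> n\<close> by (simp add: B_def)
    moreover have "pochhammer B (Suc a) \<noteq> 0"
      using B by (auto simp: pochhammer_eq_0_iff)
    ultimately show ?thesis
      by simp
  qed
  finally show ?thesis .
qed

lemma trinomial_coeff_div_fact: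
  assumes "\<sigma> \<le> 1"
  shows "trinomial_coeff (l + m + \<sigma>) x (2 * l + \<sigma>) / fact (l + m + \<sigma>) =
    (\<Sum>a\<le>l. if l - a \<le> m
      then (2 * x) ^ (2 * l + \<sigma> - 2 * a) / (fact (2 * l + \<sigma> - 2 * a) * fact a * fact (m + a - l)) else 0)"
  unfolding trinomial_coeff_closed_form sum_divide_distrib
proof (intro sum.cong)
  show "{..(2 * l + \<sigma>) div 2} = {..l}"
    using assms by auto
next
  fix a
  assume "a \<in> {..l}"
  then have "(2 * l + \<sigma> - a \<le> l + m + \<sigma>) = (l - a \<le> m)" "l + m + \<sigma> + a - (2 * l + \<sigma>) = m + a - l"
    by auto
  then show "(if 2 * l + \<sigma> - a \<le> l + m + \<sigma>
        then fact (l + m + \<sigma>) / (fact (2 * l + \<sigma> - 2 * a) * fact a * fact (l + m + \<sigma> + a - (2 * l + \<sigma>)))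
          * (2 * x) ^ (2 * l + \<sigma> - 2 * a) else 0) / fact (l + m + \<sigma>)
      = (if l - a \<le> m
        then (2 * x) ^ (2 * l + \<sigma> - 2 * a) / (fact (2 * l + \<sigma> - 2 * a) * fact a * fact (m + a - l)) else 0)"
    by simp
qed

lemma sum_gegenbauer_weights:
  fixes \<rho> :: real
  assumes \<rho>: "\<rho> \<notin> \<int>\<^sub>\<le>\<^sub>0" and "a \<le> l"
  shows "(\<Sum>m\<le>l. if l - a \<le> m then (-1) ^ (m + l) * pochhammer \<rho> (2 * l + \<sigma> + 1)
        / (fact (l - m) * (\<rho> + real (l + m + \<sigma>))) / fact (m + a - l) else 0)
    = (-1) ^ a * pochhammer \<rho> (2 * l + \<sigma> - a)"
proof -
  define n where "n = 2 * l + \<sigma>"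
  define w where "w m = (-1) ^ (m + l) * pochhammer \<rho> (n + 1) / (fact (l - m) * (\<rho> + real (l + m + \<sigma>)))" for m
  have "{m \<in> {..l}. l - a \<le> m} = {0 + (l - a)..a + (l - a)}"
    using \<open>a \<le> l\<close> by auto
  then have "(\<Sum>m\<le>l. if l - a \<le> m then w m / fact (m + a - l) else 0)
      = (\<Sum>r\<in>{0..a}. w (r + (l - a)) / fact (r + (l - a) + a - l))"
    by (simp only: sum.inter_filter[OF finite_atMost, symmetric] sum.shift_bounds_cl_nat_ivl)
  also have "\<dots> = (-1) ^ a * (\<Sum>r\<le>a. (-1) ^ r * pochhammer \<rho> (n + 1) / (fact (a - r) * fact r * (\<rho> + real (n - a + r))))"
    unfolding sum_distrib_left
  proof (intro sum.cong)
    fix r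
    assume "r \<in> {..a}"
    then have exponent: "r + (l - a) + l = 2 * (l - a) + (a + r)"
      using \<open>a \<le> l\<close> by simp
    have "(-1::real) ^ (r + (l - a) + l) = (-1) ^ a * (-1) ^ r"
      unfolding exponent power_add power_mult by simp
    moreover have "l - (r + (l - a)) = a - r" "r + (l - a) + a - l = r"
      "\<rho> + real (l + (r + (l - a)) + \<sigma>) = \<rho> + real (n - a + r)"
      using \<open>a \<le> l\<close> \<open>r \<in> {..a}\<close> by (auto simp: n_def)
    ultimately show "w (r + (l - a)) / fact (r + (l - a) + a - l)
        = (-1) ^ a * ((-1) ^ r * pochhammer \<rho> (n + 1) / (fact (a - r) * fact r * (\<rho> + real (n - a + r))))"
      unfolding w_def by (simp add: ac_simps)
  qed auto
  also have "\<dots> = (-1) ^ a * pochhammer \<rho> (n - a)"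
    using \<open>a \<le> l\<close> by (simp only: sum_alternating_pochhammer_div[OF \<rho>] n_def)
  finally show ?thesis
    unfolding w_def n_def .
qed

lemma gegenbauer_eq_trinomial_sum:
  fixes \<rho> x :: real
  assumes \<rho>: "\<rho> \<notin> \<int>\<^sub>\<le>\<^sub>0" and \<sigma>: "\<sigma> \<le> 1"
  shows "gegenbauer (2 * l + \<sigma>) \<rho> x =
    (\<Sum>m\<le>l. (-1) ^ (m + l) * pochhammer \<rho> (2 * l + \<sigma> + 1) / (fact (l - m) * (\<rho> + real (l + m + \<sigma>)))
      * (trinomial_coeff (l + m + \<sigma>) x (2 * l + \<sigma>) / fact (l + m + \<sigma>)))"
proof -
  define c where "c a = (2 * x) ^ (2 * l + \<sigma> - 2 * a) / (fact (2 * l + \<sigma> - 2 * a) * fact a)" for a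
  define w where "w m = (-1) ^ (m + l) * pochhammer \<rho> (2 * l + \<sigma> + 1) / (fact (l - m) * (\<rho> + real (l + m + \<sigma>)))"
    for m
  have "(\<Sum>m\<le>l. w m * (trinomial_coeff (l + m + \<sigma>) x (2 * l + \<sigma>) / fact (l + m + \<sigma>)))
      = (\<Sum>m\<le>l. \<Sum>a\<le>l. if l - a \<le> m then c a * (w m / fact (m + a - l)) else 0)"
    unfolding trinomial_coeff_div_fact[OF \<sigma>] sum_distrib_left
    by (intro sum.cong refl) (simp add: c_def)
  also have "\<dots> = (\<Sum>a\<le>l. c a * (\<Sum>m\<le>l. if l - a \<le> m then w m / fact (m + a - l) else 0))"
    unfolding sum_distrib_left by (subst sum.swap) (auto intro!: sum.cong)
  also have "\<dots> = (\<Sum>a\<le>l. (-1) ^ a * pochhammer \<rho> (2 * l + \<sigma> - a) / (fact a * fact (2 * l + \<sigma> - 2 * a))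
      * (2 * x) ^ (2 * l + \<sigma> - 2 * a))"
    using sum_gegenbauer_weights[OF \<rho>] unfolding w_def
    by (intro sum.cong refl) (simp add: c_def ac_simps)
  also have "\<dots> = gegenbauer (2 * l + \<sigma>) \<rho> x"
    using \<sigma> by (simp add: gegenbauer_def)
  finally show ?thesis
    unfolding w_def ..
qed

lemma sphere_area_eq_unit_ball_vol:
  assumes "D > 0"
  shows "sphere_area D = real D * unit_ball_vol (real D)"
proof -
  have "real D / 2 \<notin> \<int>\<^sub>\<le>\<^sub>0"
    using assms by (auto dest!: nonpos_Ints_nonpos)
  then have "Gamma (real D / 2) \<noteq> 0" and Gamma: "Gamma (real D / 2 + 1) = real D / 2 * Gamma (real D / 2)"
    by (simp_all add: Gamma_eq_zero_iff Gamma_plus1)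
  then show ?thesis
    unfolding sphere_area_def unit_ball_vol_def Gamma using assms by (simp add: field_simps)
qed

lemma ball_radial_integral_power_product:
  fixes \<zeta>1 \<zeta>2 :: "'a::euclidean_space"
  assumes unit: "norm \<zeta>1 = 1" "norm \<zeta>2 = 1" and nq: "n + q = 2 * J"
  shows "ball_radial_integral (\<lambda>\<zeta>. (\<zeta>1 \<bullet> \<zeta>) ^ n * (\<zeta>2 \<bullet> \<zeta>) ^ q)
    = unit_ball_vol DIM('a) * trinomial_coeff J (\<zeta>1 \<bullet> \<zeta>2) n * (fact n * fact q)
      / (2 ^ (2 * J) * fact J * pochhammer (real DIM('a) / 2) J)"
proof -
  obtain e :: 'a where e: "e \<in> Basis"
    using nonempty_Basis by blast
  have "n \<le> 2 * J" "2 * J - n = q"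
    using nq by auto
  then have "fact (2 * J) / (fact n * fact q) * ball_radial_integral (\<lambda>\<zeta>. (\<zeta>1 \<bullet> \<zeta>) ^ n * (\<zeta>2 \<bullet> \<zeta>) ^ q)
      = trinomial_coeff J (\<zeta>1 \<bullet> \<zeta>2) n * power_moment (2 * J) e"
    using mixed_moment_eq_trinomial_coeff[OF unit _ e, of n J] by (simp add: binomial_fact)
  then have "ball_radial_integral (\<lambda>\<zeta>. (\<zeta>1 \<bullet> \<zeta>) ^ n * (\<zeta>2 \<bullet> \<zeta>) ^ q)
      = trinomial_coeff J (\<zeta>1 \<bullet> \<zeta>2) n * power_moment (2 * J) e * (fact n * fact q) / fact (2 * J)"
    by (simp add: field_simps)
  also have "power_moment (2 * J) e
      = unit_ball_vol DIM('a) * pochhammer (1 / 2) J / pochhammer (real DIM('a) / 2) J"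
    using power_moment_Basis[OF e, of J] by (simp add: field_simps pochhammer_pos less_imp_neq[symmetric])
  also have "fact (2 * J) = 2 ^ (2 * J) * pochhammer (1 / 2) J * (fact J :: real)"
    by (rule fact_double)
  finally show ?thesis
    using pochhammer_pos[of "1 / 2 :: real" J] by (simp add: field_simps)
qed

lemma sphere_mean_power_product:
  fixes \<zeta>1 \<zeta>2 :: "'a::euclidean_space"
  assumes unit: "norm \<zeta>1 = 1" "norm \<zeta>2 = 1" and nq: "n + q = 2 * J"
  shows "integral\<^sup>L sphere_surface_measure
      (\<lambda>\<zeta>. (2 * (\<zeta>1 \<bullet> \<zeta>)) ^ n / fact n * ((2 * (\<zeta>2 \<bullet> \<zeta>)) ^ q / fact q)) / sphere_area DIM('a)
    = trinomial_coeff J (\<zeta>1 \<bullet> \<zeta>2) n / (fact J * pochhammer (real DIM('a) / 2) J)"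
proof -
  have "integral\<^sup>L sphere_surface_measure
      (\<lambda>\<zeta>. (2 * (\<zeta>1 \<bullet> \<zeta>)) ^ n / fact n * ((2 * (\<zeta>2 \<bullet> \<zeta>)) ^ q / fact q))
    = real DIM('a) * ball_radial_integral
        (\<lambda>\<zeta>. 2 ^ (2 * J) / (fact n * fact q) * ((\<zeta>1 \<bullet> \<zeta>) ^ n * (\<zeta>2 \<bullet> \<zeta>) ^ q))"
    unfolding nq[symmetric]
    by (subst sphere_surface_measure_integral)
      (auto intro!: borel_measurable_continuous_onI continuous_intros arg_cong[where f=ball_radial_integral]
        simp: power_mult_distrib power_add)
  also have "\<dots> = real DIM('a) * (2 ^ (2 * J) / (fact n * fact q)
      * ball_radial_integral (\<lambda>\<zeta>. (\<zeta>1 \<bullet> \<zeta>) ^ n * (\<zeta>2 \<bullet> \<zeta>) ^ q))"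
    by (simp only: ball_radial_integral_cmult)
  also have "\<dots> = real DIM('a) * unit_ball_vol DIM('a)
      * (trinomial_coeff J (\<zeta>1 \<bullet> \<zeta>2) n / (fact J * pochhammer (real DIM('a) / 2) J))"
    unfolding ball_radial_integral_power_product[OF unit nq] by (simp add: field_simps)
  also have "real DIM('a) * unit_ball_vol DIM('a) = sphere_area DIM('a)"
    by (rule sphere_area_eq_unit_ball_vol[symmetric]) simp
  finally have "integral\<^sup>L sphere_surface_measure
      (\<lambda>\<zeta>. (2 * (\<zeta>1 \<bullet> \<zeta>)) ^ n / fact n * ((2 * (\<zeta>2 \<bullet> \<zeta>)) ^ q / fact q))
    = sphere_area DIM('a) * (trinomial_coeff J (\<zeta>1 \<bullet> \<zeta>2) n / (fact J * pochhammer (real DIM('a) / 2) J))" .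
  moreover have "sphere_area DIM('a) \<noteq> 0"
    by (simp add: sphere_area_eq_unit_ball_vol less_imp_neq[OF unit_ball_vol_pos, symmetric])
  ultimately show ?thesis
    by simp
qed

(* c and d are arbitrary factors, so that the left-hand side is literally a summand of the theorem *)
lemma Gamma_weighted_sphere_mean_power_product:
  fixes \<zeta>1 \<zeta>2 :: "'a::euclidean_space" and \<rho> c d :: real
  assumes unit: "norm \<zeta>1 = 1" "norm \<zeta>2 = 1" and nq: "n + q = 2 * J" and \<rho>: "\<rho> \<notin> \<int>\<^sub>\<le>\<^sub>0"
  shows "c * Gamma (\<rho> + real n + 1) * Gamma (\<rho> + real J) * Gamma (real DIM('a) / 2 + real J)
        / (d * Gamma \<rho> * Gamma (\<rho> + real J + 1) * Gamma (real DIM('a) / 2))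
      * (integral\<^sup>L sphere_surface_measure
          (\<lambda>\<zeta>. (2 * (\<zeta>1 \<bullet> \<zeta>)) ^ n / fact n * ((2 * (\<zeta>2 \<bullet> \<zeta>)) ^ q / fact q)) / sphere_area DIM('a))
    = c * pochhammer \<rho> (n + 1) / (d * (\<rho> + real J)) * (trinomial_coeff J (\<zeta>1 \<bullet> \<zeta>2) n / fact J)"
proof -
  define \<mu> where "\<mu> = real DIM('a) / 2"
  have \<mu>: "\<mu> > 0" "\<mu> \<notin> \<int>\<^sub>\<le>\<^sub>0"
    by (auto simp: \<mu>_def dest!: nonpos_Ints_nonpos)
  have \<rho>J: "\<rho> + real J \<notin> \<int>\<^sub>\<le>\<^sub>0"
    using \<rho> by (rule add_of_nat_notin_nonpos_Ints)
  define r where "r = \<rho> + real J"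
  have nonzero: "Gamma \<rho> \<noteq> 0" "Gamma \<mu> \<noteq> 0" "Gamma r \<noteq> 0" "r \<noteq> 0" "pochhammer \<mu> J \<noteq> 0"
    using \<rho> \<mu> \<rho>J unfolding r_def by (auto simp: Gamma_eq_zero_iff pochhammer_eq_0_iff)
  have "Gamma (\<rho> + real n + 1) = pochhammer \<rho> (n + 1) * Gamma \<rho>"
    "Gamma (\<mu> + real J) = pochhammer \<mu> J * Gamma \<mu>"
    using \<rho> \<mu> nonzero by (simp_all add: pochhammer_Gamma add_ac)
  moreover have "Gamma (r + 1) = r * Gamma r"
    using \<rho>J unfolding r_def by (rule Gamma_plus1)
  ultimately show ?thesis
    unfolding sphere_mean_power_product[OF unit nq] \<mu>_def[symmetric] r_def[symmetric]
    using nonzero by (simp add: field_simps)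
qed

theorem lemma1:
  fixes \<zeta>1 \<zeta>2 :: "real ^ 'n" and M l \<sigma> :: nat and \<rho> :: real
  assumes "CARD('n) = M" and "M \<ge> 3"
    and "norm \<zeta>1 = 1" and "norm \<zeta>2 = 1"
    and "\<sigma> \<in> {0, 1}"
    and "\<rho> \<notin> \<int>\<^sub>\<le>\<^sub>0"
  shows "gegenbauer (2*l + \<sigma>) \<rho> (\<zeta>1 \<bullet> \<zeta>2) =
    (\<Sum>m\<le>l. (-1)^(m + l) * Gamma (\<rho> + real (2*l + \<sigma>) + 1) * Gamma (\<rho> + real (l + m + \<sigma>))
                * Gamma (real M / 2 + real (l + m + \<sigma>))
              / (fact (l - m) * Gamma \<rho> * Gamma (\<rho> + real (l + m + \<sigma>) + 1) * Gamma (real M / 2))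
       * (integral\<^sup>L sphere_surface_measure
            (\<lambda>\<zeta>. (2 * (\<zeta>1 \<bullet> \<zeta>)) ^ (2*l + \<sigma>) / fact (2*l + \<sigma>)
                 * ((2 * (\<zeta>2 \<bullet> \<zeta>)) ^ (2*m + \<sigma>) / fact (2*m + \<sigma>))) / sphere_area M))"
proof -
  have "\<sigma> \<le> 1"
    using assms(5) by auto
  moreover have "DIM(real ^ 'n) = M"
    using assms(1) by simp
  moreover have "2 * l + \<sigma> + (2 * m + \<sigma>) = 2 * (l + m + \<sigma>)" for m
    by simp
  ultimately show ?thesis
    unfolding gegenbauer_eq_trinomial_sum[OF assms(6) \<open>\<sigma> \<le> 1\<close>]
    using Gamma_weighted_sphere_mean_power_product[OF assms(3,4) _ assms(6)]
    by (intro sum.cong refl) (simp only: of_nat_add[symmetric])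
qed

end
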